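(* Let $\mathbb{A}$ be a 2-category and $p:e\to b$ a 1-cell such that $\mathbb{A}$ has the two-dimensional cokernel diagram of $p$ and a right Kan extension $(t,\gamma)$ of $p$ along $p$ exists. Let $\ell:b\uparrow_pb\to b$ be the unique 1-cell with $\ell\delta^0=\mathrm{id}_b$, $\ell\delta^1=t$ and $\mathrm{id}_\ell\ast\alpha=\gamma$. Then $(t,\gamma)$ is preserved by $\delta^0:b\to b\uparrow_pb$ if and only if $\ell$ is left adjoint to $\delta^0$. In this case there is an adjunction $\ell\dashv\delta^0$ whose counit is the identity 2-cell $\mathrm{id}_{\mathrm{id}_b}:\ell\delta^0\Rightarrow\mathrm{id}_b$.
   Context: A 2-category is a $\mathbf{Cat}$-enriched category; composition of 1-cells is juxtaposition, vertical composition of 2-cells is $\cdot$, horizontal composition is $\ast$, $\mathrm{id}_f$ is the identity 2-cell on $f$. Opcomma object of $p$ along itself: an object $b\uparrow_p b$ with 1-cells $\delta^0,\delta^1:b\to b\uparrow_p b$ and a 2-cell $\alpha:\delta^1p\Rightarrow\delta^0p$ such that for every object $y$ the functor $h\mapsto(h\delta^0,h\delta^1,\mathrm{id}_h\ast\alpha)$, $\xi\mapsto(\xi\ast\mathrm{id}_{\delta^0},\xi\ast\mathrm{id}_{\delta^1})$ is an isomorphism from $\mathbb{A}(b\uparrow_p b,y)$ onto the category of triples $(h_0,h_1:b\to y,\ \beta:h_1p\Rightarrow h_0p)$ with morphisms pairs of 2-cells $(\xi_0:h_0\Rightarrow h_0',\xi_1:h_1\Rightarrow h_1')$ satisfying $(\xi_0\ast\mathrm{id}_p)\cdot\beta=\beta'\cdot(\xi_1\ast\mathrm{id}_p)$.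 Two-dimensional pushout of a span $f_0:c\to c_0$, $f_1:c\to c_1$: an object $P$ with $q_0:c_0\to P$, $q_1:c_1\to P$, $q_0f_0=q_1f_1$, such that for every $y$, $k\mapsto(kq_0,kq_1)$ is an isomorphism from $\mathbb{A}(P,y)$ onto the category of pairs $(k_0,k_1)$ with $k_0f_0=k_1f_1$, whose morphisms are pairs of 2-cells $(\xi_0,\xi_1)$ with $\xi_0\ast\mathrm{id}_{f_0}=\xi_1\ast\mathrm{id}_{f_1}$. $\mathbb{A}$ has the two-dimensional cokernel diagram of $p$ if it has an opcomma object $b\uparrow_p b$ of $p$ along itself and a two-dimensional pushout $b\uparrow_pb\uparrow_pb$ of the span $(\delta^0,\delta^1)$, with 1-cells $D^0,D^2:b\uparrow_pb\to b\uparrow_pb\uparrow_pb$ satisfying $D^2\delta^0=D^0\delta^1$. Right Kan extension of $f:z\to y$ along $g:z\to x$: a pair $(r:x\to y,\gamma:rg\Rightarrow f)$ such that for each $k:x\to y$, $\beta\mapsto\gamma\cdot(\beta\ast\mathrm{id}_g)$ is a bijection from 2-cells $k\Rightarrow r$ to 2-cells $kg\Rightarrow f$. A 1-cell $d:y\to y'$ preserves this right Kan extension if $(dr,\mathrm{id}_d\ast\gamma)$ is a right Kan extension of $df$ along $g$. *)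

theory Defs
  imports Main
begin

text \<open>Objects, 1-cells and 2-cells are given by carrier sets.
  cmp g f is the juxtaposition g f (first f, then g);
  vcmp b a is the vertical composite b \<cdot> a (first a, then b);
  hcmp b a is the horizontal composite b \<ast> a, where a lives between
  1-cells x \<rightarrow> y and b between 1-cells y \<rightarrow> z.\<close>

record ('o, 'a, 'c) two_cat =
  ob   :: "'o set"
  ar   :: "'a set"
  src  :: "'a \<Rightarrow> 'o"
  trg  :: "'a \<Rightarrow> 'o"
  idA  :: "'o \<Rightarrow> 'a"
  cmp  :: "'a \<Rightarrow> 'a \<Rightarrow> 'a"
  cl   :: "'c set"
  dom2 :: "'c \<Rightarrow> 'a"
  cod2 :: "'c \<Rightarrow> 'a"
  id2  :: "'a \<Rightarrow> 'c"
  vcmp :: "'c \<Rightarrow> 'c \<Rightarrow> 'c"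
  hcmp :: "'c \<Rightarrow> 'c \<Rightarrow> 'c"

locale two_category =
  fixes A :: "('o, 'a, 'c) two_cat"
  assumes src_ob: "f \<in> ar A \<Longrightarrow> src A f \<in> ob A"
    and trg_ob: "f \<in> ar A \<Longrightarrow> trg A f \<in> ob A"
    and idA_ar: "x \<in> ob A \<Longrightarrow> idA A x \<in> ar A"
    and idA_src: "x \<in> ob A \<Longrightarrow> src A (idA A x) = x"
    and idA_trg: "x \<in> ob A \<Longrightarrow> trg A (idA A x) = x"
    and cmp_ar: "\<lbrakk>f \<in> ar A; g \<in> ar A; trg A f = src A g\<rbrakk> \<Longrightarrow> cmp A g f \<in> ar A"
    and cmp_src: "\<lbrakk>f \<in> ar A; g \<in> ar A; trg A f = src A g\<rbrakk> \<Longrightarrow> src A (cmp A g f) = src A f"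
    and cmp_trg: "\<lbrakk>f \<in> ar A; g \<in> ar A; trg A f = src A g\<rbrakk> \<Longrightarrow> trg A (cmp A g f) = trg A g"
    and cmp_idl: "f \<in> ar A \<Longrightarrow> cmp A (idA A (trg A f)) f = f"
    and cmp_idr: "f \<in> ar A \<Longrightarrow> cmp A f (idA A (src A f)) = f"
    and cmp_assoc: "\<lbrakk>f \<in> ar A; g \<in> ar A; h \<in> ar A; trg A f = src A g; trg A g = src A h\<rbrakk>
                    \<Longrightarrow> cmp A h (cmp A g f) = cmp A (cmp A h g) f"
    and dom2_ar: "a \<in> cl A \<Longrightarrow> dom2 A a \<in> ar A"
    and cod2_ar: "a \<in> cl A \<Longrightarrow> cod2 A a \<in> ar A"
    and cell_src: "a \<in> cl A \<Longrightarrow> src A (dom2 A a) = src A (cod2 A a)"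
    and cell_trg: "a \<in> cl A \<Longrightarrow> trg A (dom2 A a) = trg A (cod2 A a)"
    and id2_cl: "f \<in> ar A \<Longrightarrow> id2 A f \<in> cl A"
    and id2_dom: "f \<in> ar A \<Longrightarrow> dom2 A (id2 A f) = f"
    and id2_cod: "f \<in> ar A \<Longrightarrow> cod2 A (id2 A f) = f"
    and vcmp_cl: "\<lbrakk>a \<in> cl A; b \<in> cl A; cod2 A a = dom2 A b\<rbrakk> \<Longrightarrow> vcmp A b a \<in> cl A"
    and vcmp_dom: "\<lbrakk>a \<in> cl A; b \<in> cl A; cod2 A a = dom2 A b\<rbrakk> \<Longrightarrow> dom2 A (vcmp A b a) = dom2 A a"
    and vcmp_cod: "\<lbrakk>a \<in> cl A; b \<in> cl A; cod2 A a = dom2 A b\<rbrakk> \<Longrightarrow> cod2 A (vcmp A b a) = cod2 A b"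
    and vcmp_idl: "a \<in> cl A \<Longrightarrow> vcmp A (id2 A (cod2 A a)) a = a"
    and vcmp_idr: "a \<in> cl A \<Longrightarrow> vcmp A a (id2 A (dom2 A a)) = a"
    and vcmp_assoc: "\<lbrakk>a \<in> cl A; b \<in> cl A; c \<in> cl A; cod2 A a = dom2 A b; cod2 A b = dom2 A c\<rbrakk>
                     \<Longrightarrow> vcmp A c (vcmp A b a) = vcmp A (vcmp A c b) a"
    and hcmp_cl: "\<lbrakk>a \<in> cl A; b \<in> cl A; trg A (dom2 A a) = src A (dom2 A b)\<rbrakk> \<Longrightarrow> hcmp A b a \<in> cl A"
    and hcmp_dom: "\<lbrakk>a \<in> cl A; b \<in> cl A; trg A (dom2 A a) = src A (dom2 A b)\<rbrakk>
                   \<Longrightarrow> dom2 A (hcmp A b a) = cmp A (dom2 A b) (dom2 A a)"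
    and hcmp_cod: "\<lbrakk>a \<in> cl A; b \<in> cl A; trg A (dom2 A a) = src A (dom2 A b)\<rbrakk>
                   \<Longrightarrow> cod2 A (hcmp A b a) = cmp A (cod2 A b) (cod2 A a)"
    and hcmp_id2: "\<lbrakk>f \<in> ar A; g \<in> ar A; trg A f = src A g\<rbrakk>
                   \<Longrightarrow> hcmp A (id2 A g) (id2 A f) = id2 A (cmp A g f)"
    and interchange: "\<lbrakk>a \<in> cl A; a' \<in> cl A; b \<in> cl A; b' \<in> cl A;
                       cod2 A a = dom2 A a'; cod2 A b = dom2 A b'; trg A (dom2 A a) = src A (dom2 A b)\<rbrakk>
                   \<Longrightarrow> hcmp A (vcmp A b' b) (vcmp A a' a) = vcmp A (hcmp A b' a') (hcmp A b a)"
    and hcmp_idl: "a \<in> cl A \<Longrightarrow> hcmp A (id2 A (idA A (trg A (dom2 A a)))) a = a"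
    and hcmp_idr: "a \<in> cl A \<Longrightarrow> hcmp A a (id2 A (idA A (src A (dom2 A a)))) = a"
    and hcmp_assoc: "\<lbrakk>a \<in> cl A; b \<in> cl A; c \<in> cl A;
                      trg A (dom2 A a) = src A (dom2 A b); trg A (dom2 A b) = src A (dom2 A c)\<rbrakk>
                   \<Longrightarrow> hcmp A c (hcmp A b a) = hcmp A (hcmp A c b) a"

definition hom1 :: "('o, 'a, 'c) two_cat \<Rightarrow> 'o \<Rightarrow> 'o \<Rightarrow> 'a set" where
  "hom1 A x y = {f \<in> ar A. src A f = x \<and> trg A f = y}"

definition hom2 :: "('o, 'a, 'c) two_cat \<Rightarrow> 'a \<Rightarrow> 'a \<Rightarrow> 'c set" where
  "hom2 A f g = {a \<in> cl A. dom2 A a = f \<and> cod2 A a = g}"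

text \<open>The comparison functor from A(P,y) to the category of triples is an isomorphism
  of categories: bijective on objects, and bijective on each hom-set.\<close>

definition opcomma :: "('o, 'a, 'c) two_cat \<Rightarrow> 'a \<Rightarrow> 'o \<Rightarrow> 'a \<Rightarrow> 'a \<Rightarrow> 'c \<Rightarrow> bool" where
  "opcomma A p P d0 d1 al \<longleftrightarrow>
     p \<in> ar A \<and> P \<in> ob A \<and>
     d0 \<in> hom1 A (trg A p) P \<and> d1 \<in> hom1 A (trg A p) P \<and>
     al \<in> hom2 A (cmp A d1 p) (cmp A d0 p) \<and>
     (\<forall>y \<in> ob A.
        bij_betw (\<lambda>h. (cmp A h d0, cmp A h d1, hcmp A (id2 A h) al))
          (hom1 A P y)
          {(h0, h1, be). h0 \<in> hom1 A (trg A p) y \<and> h1 \<in> hom1 A (trg A p) y \<and>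
                         be \<in> hom2 A (cmp A h1 p) (cmp A h0 p)} \<and>
        (\<forall>h \<in> hom1 A P y. \<forall>h' \<in> hom1 A P y.
           bij_betw (\<lambda>xi. (hcmp A xi (id2 A d0), hcmp A xi (id2 A d1)))
             (hom2 A h h')
             {(xi0, xi1). xi0 \<in> hom2 A (cmp A h d0) (cmp A h' d0) \<and>
                          xi1 \<in> hom2 A (cmp A h d1) (cmp A h' d1) \<and>
                          vcmp A (hcmp A xi0 (id2 A p)) (hcmp A (id2 A h) al) =
                          vcmp A (hcmp A (id2 A h') al) (hcmp A xi1 (id2 A p))}))"

definition two_pushout :: "('o, 'a, 'c) two_cat \<Rightarrow> 'a \<Rightarrow> 'a \<Rightarrow> 'o \<Rightarrow> 'a \<Rightarrow> 'a \<Rightarrow> bool" where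
  "two_pushout A f0 f1 P q0 q1 \<longleftrightarrow>
     f0 \<in> ar A \<and> f1 \<in> ar A \<and> src A f0 = src A f1 \<and> P \<in> ob A \<and>
     q0 \<in> hom1 A (trg A f0) P \<and> q1 \<in> hom1 A (trg A f1) P \<and>
     cmp A q0 f0 = cmp A q1 f1 \<and>
     (\<forall>y \<in> ob A.
        bij_betw (\<lambda>k. (cmp A k q0, cmp A k q1))
          (hom1 A P y)
          {(k0, k1). k0 \<in> hom1 A (trg A f0) y \<and> k1 \<in> hom1 A (trg A f1) y \<and>
                     cmp A k0 f0 = cmp A k1 f1} \<and>
        (\<forall>k \<in> hom1 A P y. \<forall>k' \<in> hom1 A P y.
           bij_betw (\<lambda>xi. (hcmp A xi (id2 A q0), hcmp A xi (id2 A q1)))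
             (hom2 A k k')
             {(xi0, xi1). xi0 \<in> hom2 A (cmp A k q0) (cmp A k' q0) \<and>
                          xi1 \<in> hom2 A (cmp A k q1) (cmp A k' q1) \<and>
                          hcmp A xi0 (id2 A f0) = hcmp A xi1 (id2 A f1)}))"

definition right_kan :: "('o, 'a, 'c) two_cat \<Rightarrow> 'a \<Rightarrow> 'a \<Rightarrow> 'a \<Rightarrow> 'c \<Rightarrow> bool" where
  "right_kan A f g r ga \<longleftrightarrow>
     f \<in> ar A \<and> g \<in> ar A \<and> src A f = src A g \<and>
     r \<in> hom1 A (trg A g) (trg A f) \<and>
     ga \<in> hom2 A (cmp A r g) f \<and>
     (\<forall>k \<in> hom1 A (trg A g) (trg A f).
        bij_betw (\<lambda>be. vcmp A ga (hcmp A be (id2 A g))) (hom2 A k r) (hom2 A (cmp A k g) f))"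

definition preserves_right_kan ::
  "('o, 'a, 'c) two_cat \<Rightarrow> 'a \<Rightarrow> 'a \<Rightarrow> 'a \<Rightarrow> 'a \<Rightarrow> 'c \<Rightarrow> bool" where
  "preserves_right_kan A d f g r ga \<longleftrightarrow>
     d \<in> ar A \<and> src A d = trg A f \<and>
     right_kan A (cmp A d f) g (cmp A d r) (hcmp A (id2 A d) ga)"

definition adjunction :: "('o, 'a, 'c) two_cat \<Rightarrow> 'a \<Rightarrow> 'a \<Rightarrow> 'c \<Rightarrow> 'c \<Rightarrow> bool" where
  "adjunction A l u et ep \<longleftrightarrow>
     l \<in> ar A \<and> u \<in> hom1 A (trg A l) (src A l) \<and>
     et \<in> hom2 A (idA A (src A l)) (cmp A u l) \<and>
     ep \<in> hom2 A (cmp A l u) (idA A (trg A l)) \<and>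
     vcmp A (hcmp A ep (id2 A l)) (hcmp A (id2 A l) et) = id2 A l \<and>
     vcmp A (hcmp A (id2 A u) ep) (hcmp A et (id2 A u)) = id2 A u"

definition left_adjoint :: "('o, 'a, 'c) two_cat \<Rightarrow> 'a \<Rightarrow> 'a \<Rightarrow> bool" where
  "left_adjoint A l u \<longleftrightarrow> (\<exists>et ep. adjunction A l u et ep)"

end

(* If l is left adjoint to d0, then d0 preserves (t, ga) because right adjoints preserve
   all right Kan extensions: transposing along the adjunction identifies the universal
   property of (d0 t, d0 ga) at k with that of (t, ga) at l k.
   Conversely, if d0 preserves (t, ga), the opcomma cell al factors as (d0 ga)(be p) for a
   unique be : d1 => d0 t, and the two-dimensional property of the opcomma object turns the
   pair (id d0, be) into a 2-cell et : id => d0 l with et d0 = id.  Whiskering with l gives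
   l be = id t (by the Kan property of (t, ga)) and hence l et = id l (by the opcomma
   property); these are the triangle identities for et and the identity counit. *)

theory Submission
  imports Defs
begin

context two_category
begin

lemma cmp_idA_left: "f \<in> ar A \<Longrightarrow> trg A f = y \<Longrightarrow> cmp A (idA A y) f = f"
  using cmp_idl by blast

lemma cmp_idA_right: "f \<in> ar A \<Longrightarrow> src A f = x \<Longrightarrow> cmp A f (idA A x) = f"
  using cmp_idr by blast

lemma hcmp_idA_left: "a \<in> cl A \<Longrightarrow> trg A (dom2 A a) = y \<Longrightarrow> hcmp A (id2 A (idA A y)) a = a"
  using hcmp_idl by blast

lemma vcmp_id2_left: "a \<in> cl A \<Longrightarrow> cod2 A a = g \<Longrightarrow> vcmp A (id2 A g) a = a"
  using vcmp_idl by blast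

lemma vcmp_id2_right: "a \<in> cl A \<Longrightarrow> dom2 A a = g \<Longrightarrow> vcmp A a (id2 A g) = a"
  using vcmp_idr by blast

lemmas cell_simps = src_ob trg_ob idA_ar idA_src idA_trg cmp_ar cmp_src cmp_trg
  dom2_ar cod2_ar id2_cl id2_dom id2_cod vcmp_cl vcmp_dom vcmp_cod hcmp_cl hcmp_dom hcmp_cod
  cmp_idA_left cmp_idA_right cmp_assoc[symmetric]

lemma hcmp_as_vcmp_dom_cod:
  assumes "a \<in> cl A" "b \<in> cl A" "trg A (dom2 A a) = src A (dom2 A b)"
  shows "hcmp A b a = vcmp A (hcmp A b (id2 A (cod2 A a))) (hcmp A (id2 A (dom2 A b)) a)"
  using assms interchange[of a "id2 A (cod2 A a)" "id2 A (dom2 A b)" b]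
  by (simp add: cell_simps cell_src cell_trg vcmp_idl vcmp_idr)

lemma hcmp_as_vcmp_cod_dom:
  assumes "a \<in> cl A" "b \<in> cl A" "trg A (dom2 A a) = src A (dom2 A b)"
  shows "hcmp A b a = vcmp A (hcmp A (id2 A (cod2 A b)) a) (hcmp A b (id2 A (dom2 A a)))"
  using assms interchange[of "id2 A (dom2 A a)" a b "id2 A (cod2 A b)"]
  by (simp add: cell_simps cell_src cell_trg vcmp_idl vcmp_idr)

lemma whisker_left_vcmp:
  assumes "a \<in> cl A" "b \<in> cl A" "cod2 A a = dom2 A b" "g \<in> ar A" "trg A (dom2 A a) = src A g"
  shows "hcmp A (id2 A g) (vcmp A b a) = vcmp A (hcmp A (id2 A g) b) (hcmp A (id2 A g) a)"
  using assms interchange[of a b "id2 A g" "id2 A g"] by (simp add: cell_simps vcmp_id2_left)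

lemma whisker_right_vcmp:
  assumes "a \<in> cl A" "b \<in> cl A" "cod2 A a = dom2 A b" "f \<in> ar A" "trg A f = src A (dom2 A a)"
  shows "hcmp A (vcmp A b a) (id2 A f) = vcmp A (hcmp A b (id2 A f)) (hcmp A a (id2 A f))"
  using assms interchange[of "id2 A f" "id2 A f" a b] by (simp add: cell_simps vcmp_id2_left)

lemma whisker_left_cmp:
  assumes "a \<in> cl A" "f \<in> ar A" "g \<in> ar A" "trg A (dom2 A a) = src A f" "trg A f = src A g"
  shows "hcmp A (id2 A g) (hcmp A (id2 A f) a) = hcmp A (id2 A (cmp A g f)) a"
  using assms hcmp_assoc[of a "id2 A f" "id2 A g"] by (simp add: cell_simps hcmp_id2)

lemma whisker_right_cmp:
  assumes "a \<in> cl A" "f \<in> ar A" "g \<in> ar A" "trg A g = src A f" "trg A f = src A (dom2 A a)"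
  shows "hcmp A (hcmp A a (id2 A f)) (id2 A g) = hcmp A a (id2 A (cmp A f g))"
  using assms hcmp_assoc[of "id2 A g" "id2 A f" a] by (simp add: cell_simps hcmp_id2)

lemma adjunction_cells:
  assumes "adjunction A l u et ep"
  shows "l \<in> ar A" "u \<in> ar A" "src A u = trg A l" "trg A u = src A l"
    "et \<in> cl A" "dom2 A et = idA A (src A l)" "cod2 A et = cmp A u l"
    "ep \<in> cl A" "dom2 A ep = cmp A l u" "cod2 A ep = idA A (trg A l)"
  using assms by (auto simp: adjunction_def hom1_def hom2_def)

lemma adjunction_transpose_left_inverse:
  assumes adj: "adjunction A l u et ep"
    and k: "k \<in> hom1 A x (src A l)" and r: "r \<in> hom1 A x (trg A l)"
    and be: "be \<in> hom2 A k (cmp A u r)"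
  shows "vcmp A (hcmp A (id2 A u) (vcmp A (hcmp A ep (id2 A r)) (hcmp A (id2 A l) be)))
           (hcmp A et (id2 A k)) = be" (is "?lhs = _")
proof -
  note T = adjunction_cells[OF adj] k[unfolded hom1_def] r[unfolded hom1_def] be[unfolded hom2_def]
  have tri: "vcmp A (hcmp A (id2 A u) ep) (hcmp A et (id2 A u)) = id2 A u"
    using adj by (simp add: adjunction_def)
  have "hcmp A (id2 A u) (vcmp A (hcmp A ep (id2 A r)) (hcmp A (id2 A l) be))
      = vcmp A (hcmp A (hcmp A (id2 A u) ep) (id2 A r)) (hcmp A (id2 A (cmp A u l)) be)"
    using T by (simp add: whisker_left_vcmp hcmp_assoc hcmp_id2 cell_simps)
  then have "?lhs = vcmp A (hcmp A (hcmp A (id2 A u) ep) (id2 A r))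
      (vcmp A (hcmp A (id2 A (cmp A u l)) be) (hcmp A et (id2 A k)))"
    using T by (simp add: vcmp_assoc cell_simps)
  also have "vcmp A (hcmp A (id2 A (cmp A u l)) be) (hcmp A et (id2 A k)) = hcmp A et be"
    using T hcmp_as_vcmp_cod_dom[of be et] by (simp add: cell_simps)
  also have "\<dots> = vcmp A (hcmp A (hcmp A et (id2 A u)) (id2 A r)) be"
    using T hcmp_as_vcmp_dom_cod[of be et] by (simp add: whisker_right_cmp hcmp_idA_left cell_simps)
  also have "vcmp A (hcmp A (hcmp A (id2 A u) ep) (id2 A r)) \<dots>
      = vcmp A (hcmp A (vcmp A (hcmp A (id2 A u) ep) (hcmp A et (id2 A u))) (id2 A r)) be"
    using T by (simp add: vcmp_assoc whisker_right_vcmp cell_simps)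
  also have "\<dots> = be"
    using T tri by (simp add: hcmp_id2 vcmp_id2_left cell_simps)
  finally show ?thesis .
qed

lemma adjunction_transpose_right_inverse:
  assumes adj: "adjunction A l u et ep"
    and k: "k \<in> hom1 A x (src A l)" and r: "r \<in> hom1 A x (trg A l)"
    and ga: "ga \<in> hom2 A (cmp A l k) r"
  shows "vcmp A (hcmp A ep (id2 A r))
           (hcmp A (id2 A l) (vcmp A (hcmp A (id2 A u) ga) (hcmp A et (id2 A k)))) = ga"
    (is "?lhs = _")
proof -
  note T = adjunction_cells[OF adj] k[unfolded hom1_def] r[unfolded hom1_def] ga[unfolded hom2_def]
  have tri: "vcmp A (hcmp A ep (id2 A l)) (hcmp A (id2 A l) et) = id2 A l"
    using adj by (simp add: adjunction_def)
  have "hcmp A (id2 A l) (vcmp A (hcmp A (id2 A u) ga) (hcmp A et (id2 A k)))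
      = vcmp A (hcmp A (id2 A (cmp A l u)) ga) (hcmp A (hcmp A (id2 A l) et) (id2 A k))"
    using T by (simp add: whisker_left_vcmp hcmp_assoc hcmp_id2 cell_simps)
  then have "?lhs = vcmp A (vcmp A (hcmp A ep (id2 A r)) (hcmp A (id2 A (cmp A l u)) ga))
      (hcmp A (hcmp A (id2 A l) et) (id2 A k))"
    using T by (simp add: vcmp_assoc cell_simps)
  also have "vcmp A (hcmp A ep (id2 A r)) (hcmp A (id2 A (cmp A l u)) ga) = hcmp A ep ga"
    using T hcmp_as_vcmp_dom_cod[of ga ep] by (simp add: cell_simps)
  also have "\<dots> = vcmp A ga (hcmp A (hcmp A ep (id2 A l)) (id2 A k))"
    using T hcmp_as_vcmp_cod_dom[of ga ep] by (simp add: whisker_right_cmp hcmp_idA_left cell_simps)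
  also have "vcmp A \<dots> (hcmp A (hcmp A (id2 A l) et) (id2 A k))
      = vcmp A ga (hcmp A (vcmp A (hcmp A ep (id2 A l)) (hcmp A (id2 A l) et)) (id2 A k))"
    using T by (simp add: vcmp_assoc whisker_right_vcmp cell_simps)
  also have "\<dots> = ga"
    using T tri by (simp add: hcmp_id2 vcmp_id2_right cell_simps)
  finally show ?thesis .
qed

lemma adjunction_transpose_bij:
  assumes adj: "adjunction A l u et ep"
    and k: "k \<in> hom1 A x (src A l)" and r: "r \<in> hom1 A x (trg A l)"
  shows "bij_betw (\<lambda>be. vcmp A (hcmp A ep (id2 A r)) (hcmp A (id2 A l) be))
           (hom2 A k (cmp A u r)) (hom2 A (cmp A l k) r)"
proof (rule bij_betw_byWitness[where f' = "\<lambda>ga. vcmp A (hcmp A (id2 A u) ga) (hcmp A et (id2 A k))"])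
  note T = adjunction_cells[OF adj] k[unfolded hom1_def] r[unfolded hom1_def]
  show "(\<lambda>be. vcmp A (hcmp A ep (id2 A r)) (hcmp A (id2 A l) be)) ` hom2 A k (cmp A u r)
      \<subseteq> hom2 A (cmp A l k) r"
    using T by (auto simp: hom2_def cell_simps)
  show "(\<lambda>ga. vcmp A (hcmp A (id2 A u) ga) (hcmp A et (id2 A k))) ` hom2 A (cmp A l k) r
      \<subseteq> hom2 A k (cmp A u r)"
    using T by (auto simp: hom2_def cell_simps)
qed (use adjunction_transpose_left_inverse[OF assms] adjunction_transpose_right_inverse[OF assms] in auto)

lemma right_kan_bij:
  assumes "right_kan A f g r ga" "k \<in> hom1 A (trg A g) (trg A f)"
  shows "bij_betw (\<lambda>be. vcmp A ga (hcmp A be (id2 A g))) (hom2 A k r) (hom2 A (cmp A k g) f)"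
  using assms by (simp add: right_kan_def)

lemma right_kan_factor:
  assumes "right_kan A f g r ga" "k \<in> hom1 A (trg A g) (trg A f)" "al \<in> hom2 A (cmp A k g) f"
  obtains be where "be \<in> hom2 A k r" "vcmp A ga (hcmp A be (id2 A g)) = al"
proof -
  have "al \<in> (\<lambda>be. vcmp A ga (hcmp A be (id2 A g))) ` hom2 A k r"
    using bij_betw_imp_surj_on[OF right_kan_bij[OF assms(1,2)]] assms(3) by simp
  then show thesis
    using that by blast
qed

lemma right_kan_2cell_eqI:
  assumes "right_kan A f g r ga" "k \<in> hom1 A (trg A g) (trg A f)"
    and "be \<in> hom2 A k r" "be' \<in> hom2 A k r"
    and "vcmp A ga (hcmp A be (id2 A g)) = vcmp A ga (hcmp A be' (id2 A g))"
  shows "be = be'"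
  using bij_betw_imp_inj_on[OF right_kan_bij[OF assms(1,2)]] assms(5,3,4) by (rule inj_onD)

lemma counit_transpose_whisker:
  assumes l: "l \<in> hom1 A x y" and u: "u \<in> hom1 A y x"
    and ep: "ep \<in> hom2 A (cmp A l u) (idA A y)"
    and ga: "ga \<in> hom2 A (cmp A r g) f" and r: "r \<in> hom1 A w y" and g: "g \<in> hom1 A z w"
    and be: "be \<in> hom2 A k (cmp A u r)" and k: "k \<in> hom1 A w x"
  shows "vcmp A (hcmp A ep (id2 A f))
           (hcmp A (id2 A l) (vcmp A (hcmp A (id2 A u) ga) (hcmp A be (id2 A g))))
       = vcmp A ga (hcmp A (vcmp A (hcmp A ep (id2 A r)) (hcmp A (id2 A l) be)) (id2 A g))"
    (is "?lhs = _")
proof -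
  have f: "f \<in> ar A" "src A f = z" "trg A f = y"
    using ga r g cod2_ar cell_src cell_trg by (fastforce simp: hom1_def hom2_def cell_simps)+
  note T = assms[unfolded hom1_def hom2_def] f
  have "hcmp A (id2 A l) (vcmp A (hcmp A (id2 A u) ga) (hcmp A be (id2 A g)))
      = vcmp A (hcmp A (id2 A (cmp A l u)) ga) (hcmp A (hcmp A (id2 A l) be) (id2 A g))"
    using T by (simp add: whisker_left_vcmp hcmp_assoc hcmp_id2 cell_simps)
  then have "?lhs = vcmp A (vcmp A (hcmp A ep (id2 A f)) (hcmp A (id2 A (cmp A l u)) ga))
      (hcmp A (hcmp A (id2 A l) be) (id2 A g))"
    using T by (simp add: vcmp_assoc cell_simps)
  also have "vcmp A (hcmp A ep (id2 A f)) (hcmp A (id2 A (cmp A l u)) ga) = hcmp A ep ga"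
    using T hcmp_as_vcmp_dom_cod[of ga ep] by (simp add: cell_simps)
  also have "\<dots> = vcmp A ga (hcmp A (hcmp A ep (id2 A r)) (id2 A g))"
    using T hcmp_as_vcmp_cod_dom[of ga ep] by (simp add: whisker_right_cmp hcmp_idA_left cell_simps)
  also have "vcmp A \<dots> (hcmp A (hcmp A (id2 A l) be) (id2 A g))
      = vcmp A ga (hcmp A (vcmp A (hcmp A ep (id2 A r)) (hcmp A (id2 A l) be)) (id2 A g))"
    using T by (simp add: vcmp_assoc whisker_right_vcmp cell_simps)
  finally show ?thesis .
qed

lemma right_adjoint_preserves_right_kan:
  assumes adj: "adjunction A l u et ep" and kan: "right_kan A f g r ga"
    and "trg A f = trg A l"
  shows "preserves_right_kan A u f g r ga"
proof -
  have "f \<in> ar A" "g \<in> ar A" "src A f = src A g" "r \<in> ar A" "src A r = trg A g" "trg A r = trg A f"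
    "ga \<in> cl A" "dom2 A ga = cmp A r g" "cod2 A ga = f"
    using kan by (auto simp: right_kan_def hom1_def hom2_def)
  note T = adjunction_cells[OF adj] this assms(3)
  have "bij_betw (\<lambda>be. vcmp A (hcmp A (id2 A u) ga) (hcmp A be (id2 A g)))
          (hom2 A k (cmp A u r)) (hom2 A (cmp A k g) (cmp A u f))"
    if k: "k \<in> hom1 A (trg A g) (src A l)" for k
  proof -
    let ?\<Phi> = "\<lambda>be. vcmp A (hcmp A (id2 A u) ga) (hcmp A be (id2 A g))"
    let ?transpose = "\<lambda>s be. vcmp A (hcmp A ep (id2 A s)) (hcmp A (id2 A l) be)"
    let ?\<Psi> = "\<lambda>be. vcmp A ga (hcmp A be (id2 A g))"
    have transpose_bij: "bij_betw (?transpose f)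
        (hom2 A (cmp A k g) (cmp A u f)) (hom2 A (cmp A l (cmp A k g)) f)"
      using T k by (intro adjunction_transpose_bij[OF adj]) (auto simp: hom1_def cell_simps)
    have \<Phi>_into: "?\<Phi> ` hom2 A k (cmp A u r) \<subseteq> hom2 A (cmp A k g) (cmp A u f)"
      using T k by (auto simp: hom1_def hom2_def cell_simps)
    have "bij_betw (?\<Psi> \<circ> ?transpose r) (hom2 A k (cmp A u r)) (hom2 A (cmp A l (cmp A k g)) f)"
    proof (rule bij_betw_trans)
      show "bij_betw (?transpose r) (hom2 A k (cmp A u r)) (hom2 A (cmp A l k) r)"
        using T k by (intro adjunction_transpose_bij[OF adj]) (auto simp: hom1_def)
      show "bij_betw ?\<Psi> (hom2 A (cmp A l k) r) (hom2 A (cmp A l (cmp A k g)) f)"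
        using right_kan_bij[OF kan, of "cmp A l k"] T k by (auto simp: hom1_def cell_simps)
    qed
    moreover have "(?\<Psi> \<circ> ?transpose r) be = (?transpose f \<circ> ?\<Phi>) be"
      if "be \<in> hom2 A k (cmp A u r)" for be
      using counit_transpose_whisker[of l _ _ u ep ga r g f _ _ be k] T k that
      by (simp add: hom1_def hom2_def)
    ultimately have "bij_betw (?transpose f \<circ> ?\<Phi>)
        (hom2 A k (cmp A u r)) (hom2 A (cmp A l (cmp A k g)) f)"
      by (simp cong: bij_betw_cong)
    then show ?thesis
      using bij_betw_comp_iff2[OF transpose_bij \<Phi>_into] by simp
  qed
  then show ?thesis
    using T by (auto simp: preserves_right_kan_def right_kan_def hom1_def hom2_def cell_simps)
qed

lemma opcomma_2cell_bij:
  assumes "opcomma A p P d0 d1 al" "h \<in> hom1 A P y" "h' \<in> hom1 A P y"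
  shows "bij_betw (\<lambda>xi. (hcmp A xi (id2 A d0), hcmp A xi (id2 A d1))) (hom2 A h h')
           {(xi0, xi1). xi0 \<in> hom2 A (cmp A h d0) (cmp A h' d0) \<and>
                        xi1 \<in> hom2 A (cmp A h d1) (cmp A h' d1) \<and>
                        vcmp A (hcmp A xi0 (id2 A p)) (hcmp A (id2 A h) al) =
                        vcmp A (hcmp A (id2 A h') al) (hcmp A xi1 (id2 A p))}"
proof -
  have "y \<in> ob A"
    using assms(2) trg_ob by (auto simp: hom1_def)
  then show ?thesis
    using assms unfolding opcomma_def by blast
qed

lemma opcomma_2cell_exists:
  assumes "opcomma A p P d0 d1 al" "h \<in> hom1 A P y" "h' \<in> hom1 A P y"
    and "xi0 \<in> hom2 A (cmp A h d0) (cmp A h' d0)" "xi1 \<in> hom2 A (cmp A h d1) (cmp A h' d1)"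
    and "vcmp A (hcmp A xi0 (id2 A p)) (hcmp A (id2 A h) al)
       = vcmp A (hcmp A (id2 A h') al) (hcmp A xi1 (id2 A p))"
  obtains xi where "xi \<in> hom2 A h h'" "hcmp A xi (id2 A d0) = xi0" "hcmp A xi (id2 A d1) = xi1"
proof -
  have "(xi0, xi1) \<in> (\<lambda>xi. (hcmp A xi (id2 A d0), hcmp A xi (id2 A d1))) ` hom2 A h h'"
    using opcomma_2cell_bij[OF assms(1-3)] assms(4-) unfolding bij_betw_def by simp
  then show thesis
    using that by blast
qed

lemma opcomma_2cell_eqI:
  assumes "opcomma A p P d0 d1 al" "h \<in> hom1 A P y" "h' \<in> hom1 A P y"
    and "xi \<in> hom2 A h h'" "xi' \<in> hom2 A h h'"
    and "hcmp A xi (id2 A d0) = hcmp A xi' (id2 A d0)" "hcmp A xi (id2 A d1) = hcmp A xi' (id2 A d1)"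
  shows "xi = xi'"
  using bij_betw_imp_inj_on[OF opcomma_2cell_bij[OF assms(1-3)]] assms(4-) by (auto dest: inj_onD)

end

locale kan_retraction = two_category A
  for A :: "('o, 'a, 'c) two_cat" +
  fixes p :: 'a and e b P :: 'o and d0 d1 t l :: 'a and al ga :: 'c
  assumes p: "p \<in> hom1 A e b"
    and opcomma: "opcomma A p P d0 d1 al"
    and kan: "right_kan A p p t ga"
    and l: "l \<in> hom1 A P b"
    and l_d0: "cmp A l d0 = idA A b"
    and l_d1: "cmp A l d1 = t"
    and l_al: "hcmp A (id2 A l) al = ga"
begin

lemma cells:
  "p \<in> ar A" "src A p = e" "trg A p = b"
  "b \<in> ob A" "P \<in> ob A"
  "d0 \<in> ar A" "src A d0 = b" "trg A d0 = P" "d1 \<in> ar A" "src A d1 = b" "trg A d1 = P"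
  "al \<in> cl A" "dom2 A al = cmp A d1 p" "cod2 A al = cmp A d0 p"
  "t \<in> ar A" "src A t = b" "trg A t = b" "ga \<in> cl A" "dom2 A ga = cmp A t p" "cod2 A ga = p"
  "l \<in> ar A" "src A l = P" "trg A l = b"
  using p opcomma kan l trg_ob by (auto simp: opcomma_def right_kan_def hom1_def hom2_def)

lemma l_d0_cmp: "f \<in> ar A \<Longrightarrow> trg A f = b \<Longrightarrow> cmp A l (cmp A d0 f) = f"
  using cells l_d0 by (metis cmp_assoc cmp_idl)

lemma l_whisker_factor:
  assumes be: "be \<in> hom2 A d1 (cmp A d0 t)"
    and factor: "vcmp A (hcmp A (id2 A d0) ga) (hcmp A be (id2 A p)) = al"
  shows "hcmp A (id2 A l) be = id2 A t"
proof (rule right_kan_2cell_eqI[OF kan])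
  note T = cells be[unfolded hom2_def]
  show "t \<in> hom1 A (trg A p) (trg A p)" "hcmp A (id2 A l) be \<in> hom2 A t t" "id2 A t \<in> hom2 A t t"
    using T l_d1 by (auto simp: hom1_def hom2_def cell_simps l_d0_cmp)
  have "vcmp A ga (hcmp A (hcmp A (id2 A l) be) (id2 A p))
      = hcmp A (id2 A l) (vcmp A (hcmp A (id2 A d0) ga) (hcmp A be (id2 A p)))"
    using T by (simp add: whisker_left_vcmp hcmp_assoc hcmp_id2 l_d0 hcmp_idA_left cell_simps)
  also have "\<dots> = vcmp A ga (hcmp A (id2 A t) (id2 A p))"
    using T by (simp add: factor l_al hcmp_id2 vcmp_id2_right cell_simps)
  finally show "vcmp A ga (hcmp A (hcmp A (id2 A l) be) (id2 A p))
      = vcmp A ga (hcmp A (id2 A t) (id2 A p))" .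
qed

lemma unit_of_preserves_right_kan:
  assumes "preserves_right_kan A d0 p p t ga"
  obtains et where "et \<in> hom2 A (idA A P) (cmp A d0 l)"
    and "hcmp A et (id2 A d0) = id2 A d0" and "hcmp A (id2 A l) et = id2 A l"
proof -
  note T = cells
  have "right_kan A (cmp A d0 p) p (cmp A d0 t) (hcmp A (id2 A d0) ga)"
    using assms by (simp add: preserves_right_kan_def)
  moreover have "d1 \<in> hom1 A (trg A p) (trg A (cmp A d0 p))" "al \<in> hom2 A (cmp A d1 p) (cmp A d0 p)"
    using T by (auto simp: hom1_def hom2_def cell_simps)
  ultimately obtain be where be: "be \<in> hom2 A d1 (cmp A d0 t)"
    and factor: "vcmp A (hcmp A (id2 A d0) ga) (hcmp A be (id2 A p)) = al"
    by (rule right_kan_factor)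
  have l_be: "hcmp A (id2 A l) be = id2 A t"
    using be factor by (rule l_whisker_factor)
  note T = T be[unfolded hom2_def]
  have P_P: "idA A P \<in> hom1 A P P" "cmp A d0 l \<in> hom1 A P P"
    using T by (auto simp: hom1_def cell_simps)
  have "id2 A d0 \<in> hom2 A (cmp A (idA A P) d0) (cmp A (cmp A d0 l) d0)"
    "be \<in> hom2 A (cmp A (idA A P) d1) (cmp A (cmp A d0 l) d1)"
    using T by (simp_all add: hom2_def cell_simps l_d0 l_d1)
  moreover have "vcmp A (hcmp A (id2 A d0) (id2 A p)) (hcmp A (id2 A (idA A P)) al)
      = vcmp A (hcmp A (id2 A (cmp A d0 l)) al) (hcmp A be (id2 A p))"
    using T factor
    by (simp add: hcmp_id2 hcmp_idA_left vcmp_id2_left whisker_left_cmp[symmetric] l_al cell_simps)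
  ultimately obtain et where et: "et \<in> hom2 A (idA A P) (cmp A d0 l)"
    and et_d0: "hcmp A et (id2 A d0) = id2 A d0" and et_d1: "hcmp A et (id2 A d1) = be"
    by (rule opcomma_2cell_exists[OF opcomma P_P])
  have "hcmp A (id2 A l) et = id2 A l"
  proof (rule opcomma_2cell_eqI[OF opcomma l l])
    show "hcmp A (id2 A l) et \<in> hom2 A l l" "id2 A l \<in> hom2 A l l"
      using T et by (auto simp: hom2_def cell_simps l_d0_cmp)
    show "hcmp A (hcmp A (id2 A l) et) (id2 A d0) = hcmp A (id2 A l) (id2 A d0)"
      using T et et_d0 by (simp add: hom2_def hcmp_assoc[symmetric] cell_simps)
    show "hcmp A (hcmp A (id2 A l) et) (id2 A d1) = hcmp A (id2 A l) (id2 A d1)"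
      using T et et_d1 l_be l_d1 by (simp add: hom2_def hcmp_assoc[symmetric] hcmp_id2 cell_simps)
  qed
  with et et_d0 show thesis
    using that by blast
qed

lemma adjunction_of_preserves_right_kan:
  assumes "preserves_right_kan A d0 p p t ga"
  shows "\<exists>et. adjunction A l d0 et (id2 A (idA A b))"
proof -
  obtain et where et: "et \<in> hom2 A (idA A P) (cmp A d0 l)"
    and et_d0: "hcmp A et (id2 A d0) = id2 A d0" and l_et: "hcmp A (id2 A l) et = id2 A l"
    using assms by (rule unit_of_preserves_right_kan)
  have "adjunction A l d0 et (id2 A (idA A b))"
    using cells et et_d0 l_et l_d0
    by (simp add: adjunction_def hom1_def hom2_def hcmp_id2 vcmp_id2_left cell_simps)
  then show ?thesis ..
qed

end

theorem proposition4p2: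
  fixes A :: "('o, 'a, 'c) two_cat"
    and p :: 'a and e b P :: 'o and d0 d1 t l :: 'a and al ga :: 'c
  assumes "two_category A"
    and "p \<in> hom1 A e b"
    and "opcomma A p P d0 d1 al"
    and "\<exists>Q D0 D2. two_pushout A d0 d1 Q D2 D0"
    and "right_kan A p p t ga"
    and "l \<in> hom1 A P b"
    and "cmp A l d0 = idA A b"
    and "cmp A l d1 = t"
    and "hcmp A (id2 A l) al = ga"
  shows "(preserves_right_kan A d0 p p t ga \<longleftrightarrow> left_adjoint A l d0) \<and>
         (preserves_right_kan A d0 p p t ga \<longrightarrow>
            (\<exists>et. adjunction A l d0 et (id2 A (idA A b))))"
proof -
  interpret kan_retraction A p e b P d0 d1 t l al ga
    using assms by (simp add: kan_retraction_def kan_retraction_axioms_def)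
  have "preserves_right_kan A d0 p p t ga" if "left_adjoint A l d0"
    using that kan cells by (auto simp: left_adjoint_def intro: right_adjoint_preserves_right_kan)
  then show ?thesis
    using adjunction_of_preserves_right_kan by (auto simp: left_adjoint_def)
qed

end
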